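(* Let $\mathcal C\subseteq\mathbf F_q^n$ be a nonzero linear code of dimension $k$ and minimum distance $d$. Then $$s(\mathcal C)=\begin{cases}k & \text{if } 2d\ge n+2,\\ k-\min\{\Delta_{d-1},\dots,\Delta_{n-d+1}\} & \text{otherwise.}\end{cases}$$
   Context: The coordinate order of $\mathcal C$ is fixed. Define $\mathcal P_0=\mathcal F_n=0$, $\mathcal P_n=\mathcal F_0=\mathcal C$, and for $1\le i\le n-1$, $\mathcal P_i=\{(c_1,\dots,c_i):(c_1,\dots,c_i,0,\dots,0)\in\mathcal C\}$ and $\mathcal F_i=\{(c_{i+1},\dots,c_n):(0,\dots,0,c_{i+1},\dots,c_n)\in\mathcal C\}$. Put $\Delta_i=\dim\mathcal P_i+\dim\mathcal F_i$. The state complexity of $\mathcal C$ (that of its minimal trellis) is $s(\mathcal C)=k-\min_{0\le i\le n}\Delta_i$. *)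

theory Defs
  imports Complex_Main "HOL-Library.Function_Algebras"
begin

text \<open>Vectors of F_q^n are represented as functions nat => 'a that vanish
at every index >= n; coordinate c_(j+1) of the paper is v j (0-based).\<close>

definition fvec :: "nat \<Rightarrow> (nat \<Rightarrow> 'a::zero) set" where
  "fvec n = {v. \<forall>j\<ge>n. v j = 0}"

definition cscale :: "'a::field \<Rightarrow> (nat \<Rightarrow> 'a) \<Rightarrow> (nat \<Rightarrow> 'a)" where
  "cscale c v = (\<lambda>j. c * v j)"

definition linear_code :: "nat \<Rightarrow> (nat \<Rightarrow> 'a::{field,finite}) set \<Rightarrow> bool" where
  "linear_code n C \<longleftrightarrow> C \<subseteq> fvec n \<and> Modules.module.subspace cscale C"

definition code_dim :: "(nat \<Rightarrow> 'a::field) set \<Rightarrow> nat" where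
  "code_dim C = Vector_Spaces.vector_space.dim cscale C"

definition hamming_dist :: "nat \<Rightarrow> (nat \<Rightarrow> 'a::zero) \<Rightarrow> (nat \<Rightarrow> 'a) \<Rightarrow> nat" where
  "hamming_dist n x y = card {j. j < n \<and> x j \<noteq> y j}"

definition min_dist :: "nat \<Rightarrow> (nat \<Rightarrow> 'a::zero) set \<Rightarrow> nat" where
  "min_dist n C = Min {hamming_dist n x y | x y. x \<in> C \<and> y \<in> C \<and> x \<noteq> y}"

definition past_code :: "nat \<Rightarrow> (nat \<Rightarrow> 'a::zero) set \<Rightarrow> nat \<Rightarrow> (nat \<Rightarrow> 'a) set" where
  "past_code n C i =
     (if i = 0 then {0} else if i = n then C
      else {(\<lambda>j. if j < i then c j else 0) | c. c \<in> C \<and> (\<forall>j. i \<le> j \<and> j < n \<longrightarrow> c j = 0)})"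

definition future_code :: "nat \<Rightarrow> (nat \<Rightarrow> 'a::zero) set \<Rightarrow> nat \<Rightarrow> (nat \<Rightarrow> 'a) set" where
  "future_code n C i =
     (if i = n then {0} else if i = 0 then C
      else {(\<lambda>j. if j < n - i then c (j + i) else 0) | c. c \<in> C \<and> (\<forall>j<i. c j = 0)})"

definition Delta :: "nat \<Rightarrow> (nat \<Rightarrow> 'a::field) set \<Rightarrow> nat \<Rightarrow> nat" where
  "Delta n C i = code_dim (past_code n C i) + code_dim (future_code n C i)"

definition state_complexity :: "nat \<Rightarrow> (nat \<Rightarrow> 'a::field) set \<Rightarrow> nat" where
  "state_complexity n C = code_dim C - Min {Delta n C i | i. i \<le> n}"

end

theory Submission
  imports Defs
begin

text \<open>A nonzero codeword has weight at least d, so P_i = 0 for i < d and F_i = 0 for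
i > n - d. Hence Delta_i = dim F_i is antitone on [0, d - 1] and Delta_i = dim P_i is monotone
on [n - d + 1, n], so the minimum of Delta over [0, n] is attained in the window
[d - 1, n - d + 1]. When 2d \<ge> n + 2 the point d - 1 lies in both ranges and Delta_(d-1) = 0.\<close>

interpretation cscale: vector_space "cscale :: 'a::field \<Rightarrow> (nat \<Rightarrow> 'a) \<Rightarrow> nat \<Rightarrow> 'a"
  by unfold_locales (auto simp: cscale_def fun_eq_iff algebra_simps)

interpretation cscale_pair: vector_space_pair
  "cscale :: 'a::field \<Rightarrow> (nat \<Rightarrow> 'a) \<Rightarrow> nat \<Rightarrow> 'a" "cscale :: 'a \<Rightarrow> (nat \<Rightarrow> 'a) \<Rightarrow> nat \<Rightarrow> 'a" ..

text \<open>The library proves the next two facts (dim_subset, dim_image_eq) only for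
finite-dimensional spaces, and nat \<Rightarrow> 'a is not one.\<close>

lemma (in vector_space) dim_le_dim_of_finite:
  assumes "S \<subseteq> T" and "finite T"
  shows "dim S \<le> dim T"
proof -
  obtain B where B: "B \<subseteq> T" "T \<subseteq> span B" "card B = dim T"
    by (rule basis_exists)
  have "S \<subseteq> span B"
    using assms(1) B(2) by (rule order_trans)
  moreover have "finite B"
    using B(1) assms(2) by (rule finite_subset)
  ultimately show ?thesis
    using dim_le_card B(3) by metis
qed

lemma (in vector_space) dim_eq_0_of_subset_0:
  assumes "S \<subseteq> {0}"
  shows "dim S = 0"
  using dim_le_card[of S "{}"] assms by simp

lemma (in vector_space_pair) dim_image_eq_of_inj_on_span:
  assumes lin: "Vector_Spaces.linear s1 s2 f" and inj: "inj_on f (vs1.span S)"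
  shows "vs2.dim (f ` S) = vs1.dim S"
proof -
  obtain B where B: "B \<subseteq> S" "vs1.independent B" "S \<subseteq> vs1.span B" "card B = vs1.dim S"
    by (rule vs1.basis_exists)
  have span_B: "vs1.span B = vs1.span S"
    using vs1.span_mono[OF B(1)] vs1.span_minimal[OF B(3) vs1.subspace_span] by (rule subset_antisym)
  have "vs2.dim (f ` S) = card (f ` B)"
  proof (rule vs2.dim_eq_card)
    show "vs2.span (f ` B) = vs2.span (f ` S)"
      using span_B by (simp add: linear_span_image[OF lin])
    show "vs2.independent (f ` B)"
      using linear_independent_injective_image[OF lin B(2)] inj span_B by simp
  qed
  also have "\<dots> = card B"
    using B(1) vs1.span_superset by (intro card_image inj_on_subset[OF inj]) blast
  finally show ?thesis
    using B(4) by simp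
qed

lemma finite_fvec: "finite (fvec n :: (nat \<Rightarrow> 'a::{zero,finite}) set)"
proof (induction n)
  case 0
  have "fvec 0 = {0 :: nat \<Rightarrow> 'a}" by (auto simp: fvec_def fun_eq_iff)
  then show ?case by simp
next
  case (Suc n)
  have "fvec (Suc n) \<subseteq> (\<lambda>(a, v). v(n := a)) ` (UNIV \<times> (fvec n :: (nat \<Rightarrow> 'a) set))"
  proof
    fix v :: "nat \<Rightarrow> 'a" assume "v \<in> fvec (Suc n)"
    then have "v(n := 0) \<in> fvec n" by (auto simp: fvec_def)
    then show "v \<in> (\<lambda>(a, v). v(n := a)) ` (UNIV \<times> fvec n)"
      by (intro image_eqI[where x = "(v n, v(n := 0))"]) auto
  qed
  moreover have "finite ((\<lambda>(a, v). v(n := a)) ` (UNIV \<times> (fvec n :: (nat \<Rightarrow> 'a) set)))"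
    using Suc.IH by simp
  ultimately show ?case
    by (rule finite_subset)
qed

text \<open>P_i and F_i as subsets of C, before truncation and shift.\<close>

definition supported_below :: "(nat \<Rightarrow> 'a::zero) set \<Rightarrow> nat \<Rightarrow> (nat \<Rightarrow> 'a) set" where
  "supported_below C i = {c \<in> C. \<forall>j\<ge>i. c j = 0}"

definition supported_from :: "(nat \<Rightarrow> 'a::zero) set \<Rightarrow> nat \<Rightarrow> (nat \<Rightarrow> 'a) set" where
  "supported_from C i = {c \<in> C. \<forall>j<i. c j = 0}"

definition shift_left :: "nat \<Rightarrow> nat \<Rightarrow> (nat \<Rightarrow> 'a::zero) \<Rightarrow> nat \<Rightarrow> 'a" where
  "shift_left n i c = (\<lambda>j. if j < n - i then c (j + i) else 0)"

lemma linear_code_zero: "linear_code n C \<Longrightarrow> 0 \<in> C"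
  by (simp add: linear_code_def cscale.subspace_0)

lemma linear_code_vanishes: "linear_code n C \<Longrightarrow> c \<in> C \<Longrightarrow> n \<le> j \<Longrightarrow> c j = 0"
  unfolding linear_code_def fvec_def by blast

lemma past_code_eq_supported_below:
  assumes "linear_code n C" and "i \<le> n"
  shows "past_code n C i = supported_below C i"
proof -
  consider "i = 0" | "0 < i" "i = n" | "0 < i" "i < n"
    using assms(2) by linarith
  then show ?thesis
  proof cases
    case 1
    then show ?thesis
      using linear_code_zero[OF assms(1)] by (auto simp: past_code_def supported_below_def fun_eq_iff)
  next
    case 2
    then show ?thesis
      using linear_code_vanishes[OF assms(1)] by (auto simp: past_code_def supported_below_def)
  next
    case 3
    have "(\<forall>j. i \<le> j \<and> j < n \<longrightarrow> c j = 0) \<longleftrightarrow> (\<forall>j\<ge>i. c j = 0)" if "c \<in> C" for c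
      using linear_code_vanishes[OF assms(1) that] not_le by blast
    moreover have "(\<lambda>j. if j < i then c j else 0) = c" if "\<forall>j\<ge>i. c j = 0" for c :: "nat \<Rightarrow> 'a"
      using that by (auto simp: fun_eq_iff)
    ultimately show ?thesis
      using 3 by (auto simp: past_code_def supported_below_def) metis
  qed
qed

lemma future_code_eq_shift_supported_from:
  assumes "linear_code n C" and "i \<le> n"
  shows "future_code n C i = shift_left n i ` supported_from C i"
proof -
  have C: "C \<subseteq> fvec n" "0 \<in> C"
    using assms(1) linear_code_zero by (auto simp: linear_code_def)
  have "shift_left n n ` supported_from C n = {0}"
    using C by (auto simp: supported_from_def shift_left_def fun_eq_iff)
  moreover have "shift_left n 0 ` supported_from C 0 = C"
  proof -
    have "shift_left n 0 c = c" if "c \<in> C" for c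
      using that C(1) by (auto simp: shift_left_def fvec_def fun_eq_iff)
    then show ?thesis
      by (force simp: supported_from_def)
  qed
  ultimately show ?thesis
    by (auto simp: future_code_def supported_from_def shift_left_def)
qed

lemma inj_on_shift_left_supported_from:
  assumes "linear_code n C"
  shows "inj_on (shift_left n i) (supported_from C i)"
proof
  fix x y assume x: "x \<in> supported_from C i" and y: "y \<in> supported_from C i"
    and eq: "shift_left n i x = shift_left n i y"
  show "x = y"
  proof
    fix j
    consider "j < i" | "i \<le> j" "j < n" | "n \<le> j" by linarith
    then show "x j = y j"
    proof cases
      case 1
      then show ?thesis
        using x y by (simp add: supported_from_def)
    next
      case 2
      then show ?thesis
        using fun_cong[OF eq, of "j - i"] by (simp add: shift_left_def diff_less_mono)
    next
      case 3
      have "x \<in> C" "y \<in> C"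
        using x y by (simp_all add: supported_from_def)
      then show ?thesis
        using 3 linear_code_vanishes[OF assms] by metis
    qed
  qed
qed

lemma code_dim_future_code:
  assumes "linear_code n C" and "i \<le> n"
  shows "code_dim (future_code n C i) = code_dim (supported_from C i)"
proof -
  have "cscale.subspace (supported_from C i)"
    using assms(1) by (auto simp: linear_code_def cscale.subspace_def supported_from_def cscale_def)
  then have span: "cscale.span (supported_from C i) = supported_from C i"
    by (rule cscale.span_eq_iff[THEN iffD2])
  have "Vector_Spaces.linear cscale cscale (shift_left n i)"
    by (auto simp: Vector_Spaces.linear_iff cscale.vector_space_axioms shift_left_def cscale_def fun_eq_iff)
  then have "cscale.dim (shift_left n i ` supported_from C i) = cscale.dim (supported_from C i)"
    using inj_on_shift_left_supported_from[OF assms(1)]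
    by (intro cscale_pair.dim_image_eq_of_inj_on_span) (simp_all add: span)
  then show ?thesis
    using assms by (simp add: code_dim_def future_code_eq_shift_supported_from)
qed

lemma Delta_eq:
  assumes "linear_code n C" and "i \<le> n"
  shows "Delta n C i = code_dim (supported_below C i) + code_dim (supported_from C i)"
  using assms by (simp add: Delta_def past_code_eq_supported_below code_dim_future_code)

lemma hamming_dist_le_length: "hamming_dist n x y \<le> n"
proof -
  have "{j. j < n \<and> x j \<noteq> y j} \<subseteq> {..<n}"
    by auto
  then show ?thesis
    unfolding hamming_dist_def using card_mono[OF finite_lessThan] by fastforce
qed

lemma hamming_dist_pos:
  assumes "x \<in> fvec n" and "y \<in> fvec n" and "x \<noteq> y"
  shows "0 < hamming_dist n x y"
proof -
  obtain j where j: "x j \<noteq> y j"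
    using assms(3) by (auto simp: fun_eq_iff)
  have "j < n"
  proof (rule ccontr)
    assume "\<not> j < n"
    then have "x j = 0" "y j = 0"
      using assms(1,2) by (simp_all add: fvec_def)
    with j show False
      by simp
  qed
  with j have "{j. j < n \<and> x j \<noteq> y j} \<noteq> {}"
    by blast
  then show ?thesis
    unfolding hamming_dist_def by (simp add: card_gt_0_iff)
qed

lemma finite_hamming_dists:
  "finite {hamming_dist n x y | x y. x \<in> C \<and> y \<in> C \<and> x \<noteq> y}"
  by (rule finite_subset[of _ "{..n}"]) (auto intro: hamming_dist_le_length)

lemma min_dist_le_weight:
  assumes "linear_code n C" and "c \<in> C" and "c \<noteq> 0"
  shows "min_dist n C \<le> card {j. j < n \<and> c j \<noteq> 0}"
proof -
  have "hamming_dist n c 0 \<in> {hamming_dist n x y | x y. x \<in> C \<and> y \<in> C \<and> x \<noteq> y}"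
    using assms linear_code_zero by blast
  then have "min_dist n C \<le> hamming_dist n c 0"
    unfolding min_dist_def by (rule Min_le[OF finite_hamming_dists])
  then show ?thesis
    by (simp add: hamming_dist_def)
qed

lemma min_dist_pos:
  assumes "linear_code n C" and "C \<noteq> {0}"
  shows "0 < min_dist n C"
proof -
  obtain c where "c \<in> C" "c \<noteq> 0"
    using assms linear_code_zero by blast
  then have nonempty: "{hamming_dist n x y | x y. x \<in> C \<and> y \<in> C \<and> x \<noteq> y} \<noteq> {}"
    using assms(1) linear_code_zero by blast
  have "C \<subseteq> fvec n"
    using assms(1) by (simp add: linear_code_def)
  then have "\<forall>h \<in> {hamming_dist n x y | x y. x \<in> C \<and> y \<in> C \<and> x \<noteq> y}. 0 < h"
    by (blast intro: hamming_dist_pos)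
  then show ?thesis
    unfolding min_dist_def by (simp only: Min_gr_iff[OF finite_hamming_dists nonempty])
qed

lemma min_dist_le_length:
  assumes "linear_code n C" and "C \<noteq> {0}"
  shows "min_dist n C \<le> n"
proof -
  obtain c where c: "c \<in> C" "c \<noteq> 0"
    using assms linear_code_zero by blast
  have "min_dist n C \<le> card {j. j < n \<and> c j \<noteq> 0}"
    using assms(1) c by (rule min_dist_le_weight)
  also have "\<dots> \<le> n"
    using hamming_dist_le_length[of n c 0] by (simp add: hamming_dist_def)
  finally show ?thesis .
qed

lemma supported_below_trivial:
  assumes "linear_code n C" and "i < min_dist n C"
  shows "supported_below C i \<subseteq> {0}"
proof
  fix c assume c: "c \<in> supported_below C i"
  show "c \<in> {0}"
  proof (rule ccontr)
    assume "c \<notin> {0}"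
    with c have "min_dist n C \<le> card {j. j < n \<and> c j \<noteq> 0}"
      by (intro min_dist_le_weight[OF assms(1)]) (auto simp: supported_below_def)
    also have "\<dots> \<le> card {..<i}"
      using c not_le by (intro card_mono) (auto simp: supported_below_def)
    finally show False
      using assms(2) by simp
  qed
qed

lemma supported_from_trivial:
  assumes "linear_code n C" and "n < i + min_dist n C"
  shows "supported_from C i \<subseteq> {0}"
proof
  fix c assume c: "c \<in> supported_from C i"
  show "c \<in> {0}"
  proof (rule ccontr)
    assume "c \<notin> {0}"
    moreover have "c \<in> fvec n"
      using c assms(1) by (auto simp: supported_from_def linear_code_def)
    ultimately have weight_pos: "0 < card {j. j < n \<and> c j \<noteq> 0}"
      using hamming_dist_pos[of c n 0] by (simp add: hamming_dist_def fvec_def)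
    from c \<open>c \<notin> {0}\<close> have "min_dist n C \<le> card {j. j < n \<and> c j \<noteq> 0}"
      by (intro min_dist_le_weight[OF assms(1)]) (auto simp: supported_from_def)
    moreover have "card {j. j < n \<and> c j \<noteq> 0} \<le> card {i..<n}"
      using c by (intro card_mono) (auto simp: supported_from_def, metis leI)
    ultimately show False
      using assms(2) weight_pos by simp
  qed
qed

lemma finite_linear_code: "linear_code n C \<Longrightarrow> finite C"
  using finite_fvec finite_subset by (auto simp: linear_code_def)

lemma Delta_antimono_below_min_dist:
  assumes "linear_code n C" and "i \<le> j" and "j < min_dist n C" and "j \<le> n"
  shows "Delta n C j \<le> Delta n C i"
proof -
  have "code_dim (supported_from C j) \<le> code_dim (supported_from C i)"
    unfolding code_dim_def using assms(2) finite_linear_code[OF assms(1)]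
    by (intro cscale.dim_le_dim_of_finite) (auto simp: supported_from_def)
  then show ?thesis
    using assms supported_below_trivial[OF assms(1)]
    by (simp add: Delta_eq code_dim_def cscale.dim_eq_0_of_subset_0)
qed

lemma Delta_mono_above_length_minus_min_dist:
  assumes "linear_code n C" and "i \<le> j" and "n < i + min_dist n C" and "j \<le> n"
  shows "Delta n C i \<le> Delta n C j"
proof -
  have "code_dim (supported_below C i) \<le> code_dim (supported_below C j)"
    unfolding code_dim_def using assms(2) finite_linear_code[OF assms(1)]
    by (intro cscale.dim_le_dim_of_finite) (auto simp: supported_below_def)
  then show ?thesis
    using assms supported_from_trivial[OF assms(1)]
    by (simp add: Delta_eq code_dim_def cscale.dim_eq_0_of_subset_0)
qed

lemma Delta_eq_0:
  assumes "linear_code n C" and "i < min_dist n C" and "n < i + min_dist n C" and "i \<le> n"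
  shows "Delta n C i = 0"
  using assms supported_below_trivial[OF assms(1)] supported_from_trivial[OF assms(1)]
  by (simp add: Delta_eq code_dim_def cscale.dim_eq_0_of_subset_0)

lemma Min_image_atMost_eq_Min_image_interval:
  fixes f :: "nat \<Rightarrow> 'b::linorder"
  assumes "a \<le> b" and "b \<le> n"
    and "\<And>i. i \<le> a \<Longrightarrow> f a \<le> f i"
    and "\<And>i. b \<le> i \<Longrightarrow> i \<le> n \<Longrightarrow> f b \<le> f i"
  shows "Min (f ` {..n}) = Min (f ` {a..b})"
proof (rule antisym)
  show "Min (f ` {..n}) \<le> Min (f ` {a..b})"
    using assms(1,2) by (intro Min_antimono) auto
  have ends: "Min (f ` {a..b}) \<le> f a" "Min (f ` {a..b}) \<le> f b"
    using assms(1) by auto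
  have "Min (f ` {a..b}) \<le> f i" if "i \<le> n" for i
  proof -
    consider "i \<le> a" | "a \<le> i" "i \<le> b" | "b \<le> i" by linarith
    then show ?thesis
    proof cases
      case 1
      then show ?thesis using ends(1) assms(3) order_trans by blast
    next
      case 2
      then show ?thesis by simp
    next
      case 3
      then show ?thesis using ends(2) assms(4) that order_trans by blast
    qed
  qed
  then show "Min (f ` {a..b}) \<le> Min (f ` {..n})"
    by simp
qed

theorem proposition2p3:
  fixes C :: "(nat \<Rightarrow> 'a::{field,finite}) set" and n k d :: nat
  assumes "linear_code n C"
    and "C \<noteq> {0}"
    and "k = code_dim C"
    and "d = min_dist n C"
  shows "state_complexity n C =
           (if 2 * d \<ge> n + 2 then k
            else k - Min {Delta n C i | i. d - 1 \<le> i \<and> i \<le> n - d + 1})"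
proof -
  have d: "0 < d" "d \<le> n"
    using min_dist_pos[OF assms(1,2)] min_dist_le_length[OF assms(1,2)] assms(4) by simp_all
  have "{Delta n C i | i. i \<le> n} = Delta n C ` {..n}"
    by auto
  then have sc: "state_complexity n C = k - Min (Delta n C ` {..n})"
    by (simp add: state_complexity_def assms(3))
  show ?thesis
  proof (cases "2 * d \<ge> n + 2")
    case True
    then have "Delta n C (d - 1) = 0"
      using assms(1,4) d by (intro Delta_eq_0) auto
    then have "Min (Delta n C ` {..n}) = 0"
      using d by (intro Min_eqI) auto
    then show ?thesis
      using sc True by simp
  next
    case False
    have "Min (Delta n C ` {..n}) = Min (Delta n C ` {d - 1..n - d + 1})"
    proof (rule Min_image_atMost_eq_Min_image_interval)
      show "Delta n C (d - 1) \<le> Delta n C i" if "i \<le> d - 1" for i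
        using that assms(1,4) d by (intro Delta_antimono_below_min_dist) auto
      show "Delta n C (n - d + 1) \<le> Delta n C i" if "n - d + 1 \<le> i" "i \<le> n" for i
        using that assms(1,4) d by (intro Delta_mono_above_length_minus_min_dist) auto
    qed (use False d in auto)
    moreover have "{Delta n C i | i. d - 1 \<le> i \<and> i \<le> n - d + 1} = Delta n C ` {d - 1..n - d + 1}"
      by auto
    ultimately show ?thesis
      using sc False by simp
  qed
qed

end
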